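(* Let $\phi$ be an LTL formula. Every tableau for $\phi$ constructed according to the rules, including the PRUNE rule, has no infinite branch. Consequently, any construction process of a tableau for $\phi$ terminates in a finished tableau, in which every leaf is ticked or crossed.
   Context: LTL formulas over a countable set $AP$ of atoms are built from atoms $p\in AP$ and the constant $\top$ using $\neg\alpha$, $\alpha\wedge\beta$, $X\alpha$ and $\alpha U\beta$. We write $\bot$ for $\neg\top$. A structure is a triple $(S,R,g)$ where $S$ is a finite set, $R\subseteq S\times S$ is serial (every state has an $R$-successor), and $g:S\to 2^{AP}$. A fullpath is a sequence $\sigma=\langle s_0,s_1,\dots\rangle$ with $(s_i,s_{i+1})\in R$ for all $i$. We write $\sigma_i=s_i$ and $\sigma_{\ge j}=\langle s_j,s_{j+1},\dots\rangle$. Truth is defined as follows: - $\sigma\models p$ iff $p\in g(\sigma_0)$; - $\sigma\models\top$ always; - $\neg$ and $\wedge$ are classical; - $\sigma\models X\alpha$ iff $\sigma_{\ge1}\models\alpha$; - $\sigma\models\alpha U\beta$ iff there is $i\ge0$ with $\sigma_{\ge i}\models\beta$ and $\sigma_{\ge j}\models\alpha$ for all $0\le j<i$. A formula is satisfiable iff it is true on some fullpath of some structure. Tableau. A tableau for $\phi$ is a finite rooted tree. Each node $u$ carries a finite set of formulas $\Gamma_u$ (its label), and the root is labelled $\{\phi\}$. We write $u<v$ when $u$ is a proper ancestor of $v$ and $u\le v$ when it is an ancestor or equal. A formula is elementary if it is an atom, a negated atom, or of the form $X\alpha$ or $\neg X\alpha$. A label is poised if it is nonempty, contains no pair $\alpha,\neg\alpha$,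 and all its formulas are elementary. An $X$-eventuality of a poised label is a member of the form $X(\alpha U\beta)$. Static rules are written "parent label / children", where $\{\chi\}\mathbin{\dot\cup}\Delta$ means $\chi\notin\Delta$: - EMPTY: $\{\}$ / tick. - CONTRADICTION: $\{\alpha,\neg\alpha\}\mathbin{\dot\cup}\Delta$ / cross. - $\neg\top$: $\{\neg\top\}\mathbin{\dot\cup}\Delta$ / cross. - $\top$: $\{\top\}\mathbin{\dot\cup}\Delta$ / $\Delta$. - $\wedge$: $\{\alpha\wedge\beta\}\mathbin{\dot\cup}\Delta$ / $\Delta\cup\{\alpha,\beta\}$. - $U$: $\{\alpha U\beta\}\mathbin{\dot\cup}\Delta$ / two children $\Delta\cup\{\beta\}$ and $\Delta\cup\{\alpha,X(\alpha U\beta)\}$. - $\neg\neg$: $\{\neg\neg\alpha\}\mathbin{\dot\cup}\Delta$ / $\Delta\cup\{\alpha\}$. - $\neg\wedge$: $\{\neg(\alpha\wedge\beta)\}\mathbin{\dot\cup}\Delta$ / two children $\Delta\cup\{\neg\alpha\}$ and $\Delta\cup\{\neg\beta\}$. - $\neg U$: $\{\neg(\alpha U\beta)\}\mathbin{\dot\cup}\Delta$ / two children $\Delta\cup\{\neg\alpha,\neg\beta\}$ and $\Delta\cup\{\neg\beta,X\neg(\alpha U\beta)\}$. Non-static rules apply only to a leaf $v$ with poised label. The first applicable one in the following list is used. - LOOP: if some $u<v$ has poised $\Gamma_u\supseteq\Gamma_v$, and for every $X(\alpha U\beta)\in\Gamma_u$ there is $w$ with $u<w\le v$ and $\beta\in\Gamma_w$,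 then $v$ is ticked. - PRUNE: if $u<v'<v$ all have the same poised label $\Gamma$, and for every $X(\alpha U\beta)\in\Gamma$, whenever some $x$ with $v'<x\le v$ has $\beta\in\Gamma_x$ there is $y$ with $u<y\le v'$ and $\beta\in\Gamma_y$, then $v$ is crossed. - PRUNE$_0$: if $u<v$ share the same poised label $\Gamma$, $\Gamma$ contains at least one $X$-eventuality, and for no $X(\alpha U\beta)\in\Gamma$ is there $x$ with $u<x\le v$ and $\beta\in\Gamma_x$, then $v$ is crossed. - TRANSITION: otherwise $v$ gets one child labelled $\{\alpha: X\alpha\in\Gamma_v\}\cup\{\neg\alpha:\neg X\alpha\in\Gamma_v\}$. A tableau is constructed from the root by repeatedly choosing any leaf that is neither ticked nor crossed and applying an applicable rule. For non-poised labels this means any applicable static rule to any suitable pivot formula. A tableau is finished if every leaf is ticked or crossed, and successful if some leaf is ticked. *)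

theory Defs
  imports Main "HOL-Library.Countable"
begin

datatype 'a ltl =
    Atom 'a
  | Top
  | Neg "'a ltl"
  | And "'a ltl" "'a ltl"
  | Next "'a ltl"
  | Until "'a ltl" "'a ltl"

definition elementary :: "'a ltl \<Rightarrow> bool" where
  "elementary f \<longleftrightarrow> (\<exists>p. f = Atom p) \<or> (\<exists>p. f = Neg (Atom p))
      \<or> (\<exists>a. f = Next a) \<or> (\<exists>a. f = Neg (Next a))"

definition poised :: "'a ltl set \<Rightarrow> bool" where
  "poised G \<longleftrightarrow> G \<noteq> {} \<and> (\<forall>a. \<not> (a \<in> G \<and> Neg a \<in> G)) \<and> (\<forall>f\<in>G. elementary f)"

datatype 'a outcome = Ticked | Crossed | Children "'a ltl set list"

text \<open>Static rules: nondeterministic choice of rule and pivot formula.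
  For a pivot \<chi> in G, the set Delta is G - {\<chi>}.\<close>

inductive static_rule :: "'a ltl set \<Rightarrow> 'a outcome \<Rightarrow> bool" where
  r_empty: "G = {} \<Longrightarrow> static_rule G Ticked"
| r_contr: "a \<in> G \<Longrightarrow> Neg a \<in> G \<Longrightarrow> static_rule G Crossed"
| r_negtop: "Neg Top \<in> G \<Longrightarrow> static_rule G Crossed"
| r_top: "Top \<in> G \<Longrightarrow> static_rule G (Children [G - {Top}])"
| r_and: "And a b \<in> G \<Longrightarrow> static_rule G (Children [(G - {And a b}) \<union> {a, b}])"
| r_until: "Until a b \<in> G \<Longrightarrow>
     static_rule G (Children [(G - {Until a b}) \<union> {b},
                              (G - {Until a b}) \<union> {a, Next (Until a b)}])"
| r_negneg: "Neg (Neg a) \<in> G \<Longrightarrow> static_rule G (Children [(G - {Neg (Neg a)}) \<union> {a}])"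
| r_negand: "Neg (And a b) \<in> G \<Longrightarrow>
     static_rule G (Children [(G - {Neg (And a b)}) \<union> {Neg a},
                              (G - {Neg (And a b)}) \<union> {Neg b}])"
| r_neguntil: "Neg (Until a b) \<in> G \<Longrightarrow>
     static_rule G (Children [(G - {Neg (Until a b)}) \<union> {Neg a, Neg b},
                              (G - {Neg (Until a b)}) \<union> {Neg b, Next (Neg (Until a b))}])"

text \<open>A history h is the list of labels on the path from the root
  (index 0) to the current leaf v (index length h - 1). Ancestor u corresponds to index i,
  and u < w \<le> v corresponds to i < w \<le> length h - 1.\<close>

definition loop_cond :: "'a ltl set list \<Rightarrow> bool" where
  "loop_cond h \<longleftrightarrow> (let n = length h - 1 in
     \<exists>i<n. poised (h ! i) \<and> h ! n \<subseteq> h ! i \<and>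
        (\<forall>a b. Next (Until a b) \<in> h ! i \<longrightarrow> (\<exists>w. i < w \<and> w \<le> n \<and> b \<in> h ! w)))"

definition prune_cond :: "'a ltl set list \<Rightarrow> bool" where
  "prune_cond h \<longleftrightarrow> (let n = length h - 1 in
     \<exists>i j. i < j \<and> j < n \<and> h ! i = h ! n \<and> h ! j = h ! n \<and> poised (h ! n) \<and>
        (\<forall>a b. Next (Until a b) \<in> h ! n \<longrightarrow>
            (\<exists>x. j < x \<and> x \<le> n \<and> b \<in> h ! x) \<longrightarrow> (\<exists>y. i < y \<and> y \<le> j \<and> b \<in> h ! y)))"

definition prune0_cond :: "'a ltl set list \<Rightarrow> bool" where
  "prune0_cond h \<longleftrightarrow> (let n = length h - 1 in
     \<exists>i<n. h ! i = h ! n \<and> poised (h ! n) \<and>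
        (\<exists>a b. Next (Until a b) \<in> h ! n) \<and>
        (\<forall>a b. Next (Until a b) \<in> h ! n \<longrightarrow> \<not> (\<exists>x. i < x \<and> x \<le> n \<and> b \<in> h ! x)))"

definition transition :: "'a ltl set \<Rightarrow> 'a ltl set" where
  "transition G = {a. Next a \<in> G} \<union> {Neg a | a. Neg (Next a) \<in> G}"

definition nonstatic_out :: "'a ltl set list \<Rightarrow> 'a outcome" where
  "nonstatic_out h =
     (if loop_cond h then Ticked
      else if prune_cond h then Crossed
      else if prune0_cond h then Crossed
      else Children [transition (last h)])"

definition rule_out :: "'a ltl set list \<Rightarrow> 'a outcome \<Rightarrow> bool" where
  "rule_out h out \<longleftrightarrow>
     (if poised (last h) then out = nonstatic_out h else static_rule (last h) out)"

datatype status = Unmarked | Tick | Cross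

text \<open>Nodes are addressed by lists of child indices; the root is [].\<close>
type_synonym 'a tab = "nat list \<Rightarrow> ('a ltl set \<times> status) option"

definition init_tab :: "'a ltl \<Rightarrow> 'a tab" where
  "init_tab phi = (\<lambda>w. if w = [] then Some ({phi}, Unmarked) else None)"

definition is_leaf :: "'a tab \<Rightarrow> nat list \<Rightarrow> bool" where
  "is_leaf T v \<longleftrightarrow> T v \<noteq> None \<and> (\<forall>i. T (v @ [i]) = None)"

definition hist :: "'a tab \<Rightarrow> nat list \<Rightarrow> 'a ltl set list" where
  "hist T v = map (\<lambda>k. fst (the (T (take k v)))) [0..<Suc (length v)]"

definition apply_out :: "'a tab \<Rightarrow> nat list \<Rightarrow> 'a ltl set \<Rightarrow> 'a outcome \<Rightarrow> 'a tab" where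
  "apply_out T v G out = (case out of
       Ticked \<Rightarrow> T(v := Some (G, Tick))
     | Crossed \<Rightarrow> T(v := Some (G, Cross))
     | Children cs \<Rightarrow> (\<lambda>w. if (\<exists>i<length cs. w = v @ [i])
                            then Some (cs ! last w, Unmarked) else T w))"

definition tab_step :: "'a tab \<Rightarrow> 'a tab \<Rightarrow> bool" where
  "tab_step T T' \<longleftrightarrow> (\<exists>v G out. T v = Some (G, Unmarked) \<and> is_leaf T v \<and>
       rule_out (hist T v) out \<and> T' = apply_out T v G out)"

definition finished :: "'a tab \<Rightarrow> bool" where
  "finished T \<longleftrightarrow> (\<forall>v G s. T v = Some (G, s) \<and> is_leaf T v \<longrightarrow> s \<noteq> Unmarked)"

definition infinite_branch :: "'a ltl \<Rightarrow> (nat \<Rightarrow> 'a ltl set) \<Rightarrow> bool" where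
  "infinite_branch phi L \<longleftrightarrow> L 0 = {phi} \<and>
     (\<forall>n. \<exists>cs. rule_out (map L [0..<Suc n]) (Children cs) \<and> L (Suc n) \<in> set cs)"

end

theory Submission
  imports Defs
begin

text \<open>
  All labels on a branch lie in the finite closure of \<open>phi\<close>, and every static rule strictly
  decreases a weight of the label, so static steps cannot go on for long. A poised label G
  occurs only boundedly often before the leaf: if it occurs at positions p0 < q < q' and PRUNE
  does not fire at q', some X-eventuality of G is fulfilled in (q, q'] but not in (p0, q], so
  the set of eventualities of G fulfilled since p0 grows strictly from one occurrence to the
  next. Hence branches have bounded length, the nodes of a tableau have binary addresses of
  bounded length, and each construction step occupies a free address or marks an unmarked
  leaf. A construction stops only in a finished tableau, since some rule applies at every
  unmarked leaf.
\<close>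

fun subformulas :: "'a ltl \<Rightarrow> 'a ltl set" where
  "subformulas (Atom p) = {Atom p}"
| "subformulas Top = {Top}"
| "subformulas (Neg a) = insert (Neg a) (subformulas a)"
| "subformulas (And a b) = insert (And a b) (subformulas a \<union> subformulas b)"
| "subformulas (Next a) = insert (Next a) (subformulas a)"
| "subformulas (Until a b) = insert (Until a b) (subformulas a \<union> subformulas b)"

lemma finite_subformulas: "finite (subformulas f)"
  by (induction f) auto

lemma subformulas_refl [simp]: "f \<in> subformulas f"
  by (cases f) auto

lemma subformulas_trans: "g \<in> subformulas f \<Longrightarrow> x \<in> subformulas g \<Longrightarrow> x \<in> subformulas f"
  by (induction f) auto

lemma subformulas_immediateD:
  "Neg a \<in> subformulas f \<Longrightarrow> a \<in> subformulas f"
  "Next a \<in> subformulas f \<Longrightarrow> a \<in> subformulas f"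
  "And a b \<in> subformulas f \<Longrightarrow> a \<in> subformulas f \<and> b \<in> subformulas f"
  "Until a b \<in> subformulas f \<Longrightarrow> a \<in> subformulas f \<and> b \<in> subformulas f"
  by (auto intro: subformulas_trans)

definition ltl_closure :: "'a ltl \<Rightarrow> 'a ltl set" where
  "ltl_closure phi = subformulas phi \<union> Neg ` subformulas phi \<union> Next ` subformulas phi
     \<union> (Next \<circ> Neg) ` subformulas phi"

lemma finite_ltl_closure: "finite (ltl_closure phi)"
  by (simp add: ltl_closure_def finite_subformulas)

lemma self_in_ltl_closure: "phi \<in> ltl_closure phi"
  by (simp add: ltl_closure_def)

lemma ltl_closure_closed:
  "Next a \<in> ltl_closure phi \<Longrightarrow> a \<in> ltl_closure phi"
  "Neg (Next a) \<in> ltl_closure phi \<Longrightarrow> Neg a \<in> ltl_closure phi"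
  "Neg (Neg a) \<in> ltl_closure phi \<Longrightarrow> a \<in> ltl_closure phi"
  "And a b \<in> ltl_closure phi \<Longrightarrow> a \<in> ltl_closure phi \<and> b \<in> ltl_closure phi"
  "Until a b \<in> ltl_closure phi \<Longrightarrow>
     a \<in> ltl_closure phi \<and> b \<in> ltl_closure phi \<and> Next (Until a b) \<in> ltl_closure phi"
  "Neg (And a b) \<in> ltl_closure phi \<Longrightarrow> Neg a \<in> ltl_closure phi \<and> Neg b \<in> ltl_closure phi"
  "Neg (Until a b) \<in> ltl_closure phi \<Longrightarrow>
     Neg a \<in> ltl_closure phi \<and> Neg b \<in> ltl_closure phi \<and> Next (Neg (Until a b)) \<in> ltl_closure phi"
  unfolding ltl_closure_def by (auto simp: image_iff dest: subformulas_immediateD)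

lemma transition_ltl_closure:
  "G \<subseteq> ltl_closure phi \<Longrightarrow> transition G \<subseteq> ltl_closure phi"
  unfolding transition_def by (auto dest: ltl_closure_closed)

lemma static_rule_ltl_closure:
  assumes "static_rule G (Children cs)" "G \<subseteq> ltl_closure phi" "c \<in> set cs"
  shows "c \<subseteq> ltl_closure phi"
  using assms(1) by cases (use assms(2,3) in \<open>auto dest: ltl_closure_closed\<close>)

section \<open>A weight decreased by static rules\<close>

fun weight :: "'a ltl \<Rightarrow> nat" where
  "weight (Atom p) = 1"
| "weight Top = 1"
| "weight (And a b) = weight a + weight b + 1"
| "weight (Next a) = 1"
| "weight (Until a b) = weight a + weight b + 2"
| "weight (Neg (Atom p)) = 1"
| "weight (Neg Top) = 1"
| "weight (Neg (Neg a)) = weight a + 1"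
| "weight (Neg (And a b)) = weight (Neg a) + weight (Neg b) + 1"
| "weight (Neg (Next a)) = 1"
| "weight (Neg (Until a b)) = weight (Neg a) + weight (Neg b) + 2"

lemma sum_replace_less:
  fixes f :: "'b \<Rightarrow> nat"
  assumes "finite G" "x \<in> G" "finite A" "sum f A < f x"
  shows "sum f ((G - {x}) \<union> A) < sum f G"
proof -
  have "sum f ((G - {x}) \<union> A) \<le> sum f (G - {x}) + sum f A"
    using assms by (simp add: sum_Un_nat)
  also have "\<dots> < sum f G"
    using assms by (simp add: sum.remove)
  finally show ?thesis .
qed

lemma sum_pair_le: "sum (f :: 'b \<Rightarrow> nat) {a, b} \<le> f a + f b"
  by (cases "a = b") auto

lemma static_rule_weight_less:
  assumes "static_rule G (Children cs)" "finite G" "c \<in> set cs"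
  shows "sum weight c < sum weight G"
  using assms(1)
proof cases
  case r_top
  then show ?thesis using assms sum_replace_less[where f = weight, of G Top "{}"] by auto
next
  case (r_and a b)
  then show ?thesis
    using assms sum_replace_less[where f = weight, of G "And a b" "{a, b}"] sum_pair_le[of weight a b] by auto
next
  case (r_until a b)
  then show ?thesis
    using assms sum_replace_less[where f = weight, of G "Until a b" "{b}"]
      sum_replace_less[where f = weight, of G "Until a b" "{a, Next (Until a b)}"]
      sum_pair_le[of weight a "Next (Until a b)"] by auto
next
  case (r_negneg a)
  then show ?thesis using assms sum_replace_less[where f = weight, of G "Neg (Neg a)" "{a}"] by auto
next
  case (r_negand a b)
  then show ?thesis
    using assms sum_replace_less[where f = weight, of G "Neg (And a b)" "{Neg a}"]
      sum_replace_less[where f = weight, of G "Neg (And a b)" "{Neg b}"] by auto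
next
  case (r_neguntil a b)
  then show ?thesis
    using assms sum_replace_less[where f = weight, of G "Neg (Until a b)" "{Neg a, Neg b}"]
      sum_replace_less[where f = weight, of G "Neg (Until a b)" "{Neg b, Next (Neg (Until a b))}"]
      sum_pair_le[of weight "Neg a" "Neg b"] sum_pair_le[of weight "Neg b" "Next (Neg (Until a b))"]
    by auto
qed

section \<open>Branches\<close>

definition branch :: "'a ltl \<Rightarrow> 'a ltl set list \<Rightarrow> bool" where
  "branch phi xs \<longleftrightarrow> xs \<noteq> [] \<and> xs ! 0 = {phi} \<and>
     (\<forall>k. Suc k < length xs \<longrightarrow>
        (\<exists>cs. rule_out (take (Suc k) xs) (Children cs) \<and> xs ! Suc k \<in> set cs))"

lemma rule_out_ChildrenE:
  assumes "rule_out h (Children cs)"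
  obtains "poised (last h)" "cs = [transition (last h)]" "\<not> prune_cond h"
  | "\<not> poised (last h)" "static_rule (last h) (Children cs)"
  using assms by (auto simp: rule_out_def nonstatic_out_def split: if_splits)

lemma rule_out_Children_length:
  assumes "rule_out h (Children cs)"
  shows "1 \<le> length cs \<and> length cs \<le> 2"
  using assms
proof (cases rule: rule_out_ChildrenE)
  case 2
  from \<open>static_rule (last h) (Children cs)\<close> show ?thesis by cases auto
qed simp

lemma branch_stepE:
  assumes "branch phi xs" "Suc k < length xs"
  obtains "poised (xs ! k)" "xs ! Suc k = transition (xs ! k)" "\<not> prune_cond (take (Suc k) xs)"
  | cs where "\<not> poised (xs ! k)" "static_rule (xs ! k) (Children cs)" "xs ! Suc k \<in> set cs"
proof -
  obtain cs where cs: "rule_out (take (Suc k) xs) (Children cs)" "xs ! Suc k \<in> set cs"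
    using assms unfolding branch_def by blast
  have "last (take (Suc k) xs) = xs ! k"
    using assms(2) by (simp add: take_Suc_conv_app_nth)
  with cs that show thesis by (cases rule: rule_out_ChildrenE) auto
qed

lemma branch_ltl_closure:
  assumes "branch phi xs" "k < length xs"
  shows "xs ! k \<subseteq> ltl_closure phi"
  using assms(2)
proof (induction k)
  case 0
  then show ?case using assms(1) by (simp add: branch_def self_in_ltl_closure)
next
  case (Suc k)
  then have "xs ! k \<subseteq> ltl_closure phi" by simp
  with assms(1) Suc.prems show ?case
    by (cases rule: branch_stepE) (auto dest: transition_ltl_closure static_rule_ltl_closure)
qed

lemma not_prune_condE:
  assumes "\<not> prune_cond h" "poised (last h)" "i < j" "j < length h - 1"
    "h ! i = last h" "h ! j = last h"
  obtains a b x where "Next (Until a b) \<in> last h" "j < x" "x < length h" "b \<in> h ! x"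
    "\<forall>y. i < y \<and> y \<le> j \<longrightarrow> b \<notin> h ! y"
proof -
  let ?n = "length h - 1"
  have "h \<noteq> []"
    using assms(4) by auto
  then have last: "last h = h ! ?n"
    by (simp add: last_conv_nth)
  have "\<not> (\<forall>a b. Next (Until a b) \<in> h ! ?n \<longrightarrow>
      (\<exists>x. j < x \<and> x \<le> ?n \<and> b \<in> h ! x) \<longrightarrow> (\<exists>y. i < y \<and> y \<le> j \<and> b \<in> h ! y))"
    using assms last unfolding prune_cond_def Let_def by auto
  then obtain a b where ab: "Next (Until a b) \<in> h ! ?n"
    "\<exists>x. j < x \<and> x \<le> ?n \<and> b \<in> h ! x" "\<not> (\<exists>y. i < y \<and> y \<le> j \<and> b \<in> h ! y)"
    by blast
  then obtain x where "j < x" "x \<le> ?n" "b \<in> h ! x"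
    by blast
  with ab last \<open>h \<noteq> []\<close> show thesis
    by (intro that[of a b x]) auto
qed

lemma branch_prune_witness:
  assumes "branch phi xs" "Suc n < length xs" "poised (xs ! n)"
    and "i < j" "j < n" "xs ! i = xs ! n" "xs ! j = xs ! n"
  obtains a b x where "Next (Until a b) \<in> xs ! n" "j < x" "x \<le> n" "b \<in> xs ! x"
    "\<forall>y. i < y \<and> y \<le> j \<longrightarrow> b \<notin> xs ! y"
proof -
  let ?h = "take (Suc n) xs"
  have h: "last ?h = xs ! n" "length ?h = Suc n" "\<And>k. k \<le> n \<Longrightarrow> ?h ! k = xs ! k"
    using assms(2) by (simp add: take_Suc_conv_app_nth, simp_all)
  have np: "\<not> prune_cond ?h"
    using assms(1-3) by (cases rule: branch_stepE) auto
  have prem: "poised (last ?h)" "j < length ?h - 1" "?h ! i = last ?h" "?h ! j = last ?h"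
    using h assms(3-7) by simp_all
  obtain a b x where ab: "Next (Until a b) \<in> last ?h" "j < x" "x < length ?h"
    "b \<in> ?h ! x" "\<forall>y. i < y \<and> y \<le> j \<longrightarrow> b \<notin> ?h ! y"
    by (rule not_prune_condE[OF np prem(1) \<open>i < j\<close> prem(2-4)])
  show thesis
  proof (rule that[of a b x])
    show "\<forall>y. i < y \<and> y \<le> j \<longrightarrow> b \<notin> xs ! y"
      using ab(5) h(3) \<open>j < n\<close> by simp
  qed (use ab h in simp_all)
qed

lemma card_poised_occurrences_le:
  assumes "branch phi xs"
  shows "card {k. Suc k < length xs \<and> poised (xs ! k) \<and> xs ! k = G}
           \<le> 2 ^ card (ltl_closure phi) + 1"
    (is "card ?P \<le> _")
proof (cases "?P = {}")
  case False
  have "finite ?P"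
    by (rule finite_subset[of _ "{..<length xs}"]) auto
  define p0 where "p0 = Min ?P"
  have "p0 \<in> ?P"
    unfolding p0_def using \<open>finite ?P\<close> False by (rule Min_in)
  have p0_le: "p0 \<le> q" if "q \<in> ?P" for q
    unfolding p0_def using \<open>finite ?P\<close> that by (rule Min_le)
  define E where "E q = {b. (\<exists>a. Next (Until a b) \<in> G) \<and> (\<exists>y. p0 < y \<and> y \<le> q \<and> b \<in> xs ! y)}"
    for q
  have "inj_on E (?P - {p0})"
  proof (rule linorder_inj_onI')
    fix q q' assume q: "q \<in> ?P - {p0}" and q': "q' \<in> ?P - {p0}" and "q < q'"
    have "p0 < q"
      using p0_le[of q] q by auto
    obtain a b x where "Next (Until a b) \<in> xs ! q'" "q < x" "x \<le> q'" "b \<in> xs ! x"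
      "\<forall>y. p0 < y \<and> y \<le> q \<longrightarrow> b \<notin> xs ! y"
      using branch_prune_witness[OF assms, of q' p0 q] q q' \<open>p0 \<in> ?P\<close> \<open>p0 < q\<close> \<open>q < q'\<close> by auto
    with q' \<open>p0 < q\<close> have "b \<in> E q'" "b \<notin> E q"
      unfolding E_def by auto
    then show "E q \<noteq> E q'" by blast
  qed
  moreover have "E q \<subseteq> ltl_closure phi" if "q \<in> ?P" for q
  proof
    fix b assume "b \<in> E q"
    then obtain y where "y \<le> q" "b \<in> xs ! y"
      unfolding E_def by blast
    with that show "b \<in> ltl_closure phi"
      using branch_ltl_closure[OF assms, of y] by auto
  qed
  then have "E ` (?P - {p0}) \<subseteq> Pow (ltl_closure phi)"
    by blast
  ultimately have "card (?P - {p0}) \<le> card (Pow (ltl_closure phi))"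
    using card_inj_on_le finite_ltl_closure by blast
  then show ?thesis
    using card_Suc_Diff1[OF \<open>finite ?P\<close> \<open>p0 \<in> ?P\<close>] by (simp add: card_Pow finite_ltl_closure)
qed (metis card.empty le0)

lemma card_poised_positions_le:
  assumes "branch phi xs"
  shows "card {k. Suc k < length xs \<and> poised (xs ! k)}
           \<le> 2 ^ card (ltl_closure phi) * (2 ^ card (ltl_closure phi) + 1)"
proof -
  let ?P = "\<lambda>G. {k. Suc k < length xs \<and> poised (xs ! k) \<and> xs ! k = G}"
  have "{k. Suc k < length xs \<and> poised (xs ! k)} = (\<Union>G\<in>Pow (ltl_closure phi). ?P G)"
    using branch_ltl_closure[OF assms] by auto
  also have "card \<dots> \<le> (\<Sum>G\<in>Pow (ltl_closure phi). card (?P G))"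
    using finite_ltl_closure by (intro card_UN_le) auto
  also have "\<dots> \<le> (\<Sum>G\<in>Pow (ltl_closure phi). 2 ^ card (ltl_closure phi) + 1)"
    using card_poised_occurrences_le[OF assms] by (intro sum_mono)
  finally show ?thesis
    by (simp add: card_Pow finite_ltl_closure)
qed

definition branch_length_bound :: "'a ltl \<Rightarrow> nat" where
  "branch_length_bound phi = (sum weight (ltl_closure phi) + 1)
     * (2 ^ card (ltl_closure phi) * (2 ^ card (ltl_closure phi) + 1)) + sum weight (ltl_closure phi) + 1"

lemma branch_length_le:
  assumes "branch phi xs"
  shows "length xs \<le> branch_length_bound phi"
proof -
  define M where "M = sum weight (ltl_closure phi)"
  define ahead where "ahead k = {j. k \<le> j \<and> Suc j < length xs \<and> poised (xs ! j)}" for k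
  \<comment> \<open>Lexicographic potential: poised nodes still ahead, then the weight of the current label.\<close>
  define F where "F k = (M + 1) * card (ahead k) + sum weight (xs ! k)" for k
  have finite_ahead: "finite (ahead k)" for k
    by (rule finite_subset[of _ "{..<length xs}"]) (auto simp: ahead_def)
  have weight_le: "sum weight (xs ! k) \<le> M" if "k < length xs" for k
    unfolding M_def using finite_ltl_closure branch_ltl_closure[OF assms that] by (rule sum_mono2) simp
  have F_decreasing: "F (Suc k) < F k" if "Suc k < length xs" for k
    using assms that
  proof (cases rule: branch_stepE)
    case 1
    then have "ahead k = insert k (ahead (Suc k))" "k \<notin> ahead (Suc k)"
      using that by (auto simp: ahead_def)
    then have "card (ahead k) = Suc (card (ahead (Suc k)))"
      using finite_ahead by simp
    then show ?thesis
      using weight_le[OF that] unfolding F_def by simp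
  next
    case (2 cs)
    then have "ahead (Suc k) = ahead k"
      by (auto simp: ahead_def Suc_le_eq le_less)
    moreover have "sum weight (xs ! Suc k) < sum weight (xs ! k)"
      using 2 branch_ltl_closure[OF assms, of k] that finite_ltl_closure
      by (intro static_rule_weight_less) (auto intro: finite_subset)
    ultimately show ?thesis
      unfolding F_def by simp
  qed
  have F_bound: "k + F k \<le> F 0" if "k < length xs" for k
    using that by (induction k) (auto dest: F_decreasing)
  have "xs \<noteq> []"
    using assms by (simp add: branch_def)
  then have "length xs - 1 \<le> F 0"
    using F_bound[of "length xs - 1"] by simp
  also have "F 0 \<le> (M + 1) * (2 ^ card (ltl_closure phi) * (2 ^ card (ltl_closure phi) + 1)) + M"
    using card_poised_positions_le[OF assms] weight_le[of 0] assms
    unfolding F_def ahead_def by (intro add_mono mult_le_mono2) (auto simp: branch_def)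
  finally show ?thesis
    unfolding branch_length_bound_def M_def by simp
qed

lemma branch_infinite_branch_prefix:
  assumes "infinite_branch phi L"
  shows "branch phi (map L [0..<Suc n])"
  unfolding branch_def
proof (intro conjI allI impI)
  show "map L [0..<Suc n] ! 0 = {phi}"
    using assms unfolding infinite_branch_def by (simp del: upt_Suc)
  fix k assume k: "Suc k < length (map L [0..<Suc n])"
  then have "take (Suc k) (map L [0..<Suc n]) = map L [0..<Suc k]"
    "map L [0..<Suc n] ! Suc k = L (Suc k)"
    by (simp_all add: take_map del: upt_Suc)
  then show "\<exists>cs. rule_out (take (Suc k) (map L [0..<Suc n])) (Children cs)
      \<and> map L [0..<Suc n] ! Suc k \<in> set cs"
    using assms unfolding infinite_branch_def by simp
qed simp

lemma no_infinite_branch: "\<not> infinite_branch phi L"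
proof
  assume "infinite_branch phi L"
  from branch_length_le[OF branch_infinite_branch_prefix[OF this]]
  show False by (metis Suc_n_not_le_n diff_zero length_map length_upt)
qed

section \<open>Tableau construction\<close>

lemma length_hist: "length (hist T v) = Suc (length v)"
  by (simp add: hist_def)

lemma hist_cong:
  assumes "\<And>k. k \<le> length v \<Longrightarrow> T' (take k v) = T (take k v)"
  shows "hist T' v = hist T v"
  unfolding hist_def using assms assms[of "length v"] by (intro map_cong) auto

lemma hist_snoc: "hist T (v @ [i]) = hist T v @ [fst (the (T (v @ [i])))]"
  by (simp add: hist_def)

lemma branch_snoc:
  assumes "branch phi xs" "rule_out xs (Children cs)" "c \<in> set cs"
  shows "branch phi (xs @ [c])"
  unfolding branch_def
proof (intro conjI allI impI)
  show "(xs @ [c]) ! 0 = {phi}"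
    using assms(1) unfolding branch_def by (simp add: nth_append)
  fix k assume "Suc k < length (xs @ [c])"
  then consider "Suc k < length xs" | "Suc k = length xs" by fastforce
  then show "\<exists>cs. rule_out (take (Suc k) (xs @ [c])) (Children cs) \<and> (xs @ [c]) ! Suc k \<in> set cs"
  proof cases
    case 1
    then show ?thesis using assms(1) unfolding branch_def by (simp add: nth_append)
  next
    case 2
    then show ?thesis using assms(2,3) by auto
  qed
qed simp

definition wf_tab :: "'a ltl \<Rightarrow> 'a tab \<Rightarrow> bool" where
  "wf_tab phi T \<longleftrightarrow> (\<forall>v. T v \<noteq> None \<longrightarrow>
     branch phi (hist T v) \<and> set v \<subseteq> {0, 1} \<and> (\<forall>k \<le> length v. T (take k v) \<noteq> None))"

lemma wf_tab_init_tab: "wf_tab phi (init_tab phi)"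
  by (auto simp: wf_tab_def init_tab_def hist_def branch_def)

definition tab_nodes :: "'a tab \<Rightarrow> nat list set" where
  "tab_nodes T = {v. T v \<noteq> None}"

definition unmarked_nodes :: "'a tab \<Rightarrow> nat list set" where
  "unmarked_nodes T = {v. \<exists>G. T v = Some (G, Unmarked)}"

definition addresses :: "'a ltl \<Rightarrow> nat list set" where
  "addresses phi = {v. set v \<subseteq> {0, 1} \<and> length v \<le> branch_length_bound phi}"

\<comment> \<open>Expanding a leaf occupies k \<ge> 1 free addresses and creates k unmarked children while
  the leaf itself stays unmarked; hence the factor 2.\<close>
definition tab_measure :: "'a ltl \<Rightarrow> 'a tab \<Rightarrow> nat" where
  "tab_measure phi T = 2 * card (addresses phi - tab_nodes T) + card (unmarked_nodes T)"

lemma finite_addresses: "finite (addresses phi)"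
  unfolding addresses_def by (rule finite_lists_length_le) simp

lemma wf_tab_nodes_addresses:
  assumes "wf_tab phi T"
  shows "tab_nodes T \<subseteq> addresses phi"
proof
  fix v assume "v \<in> tab_nodes T"
  then have "branch phi (hist T v)" "set v \<subseteq> {0, 1}"
    using assms unfolding wf_tab_def tab_nodes_def by auto
  then show "v \<in> addresses phi"
    using branch_length_le[of phi "hist T v"] unfolding addresses_def length_hist by simp
qed

lemma finite_unmarked_nodes:
  assumes "wf_tab phi T"
  shows "finite (unmarked_nodes T)"
proof (rule finite_subset)
  show "unmarked_nodes T \<subseteq> addresses phi"
    using wf_tab_nodes_addresses[OF assms] unfolding unmarked_nodes_def tab_nodes_def by auto
qed (rule finite_addresses)

lemma tab_step_mark:
  assumes "wf_tab phi T" "T v = Some (G, Unmarked)" "s \<noteq> Unmarked"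
  shows "wf_tab phi (T(v := Some (G, s)))"
    and "tab_measure phi (T(v := Some (G, s))) < tab_measure phi T"
proof -
  let ?T' = "T(v := Some (G, s))"
  have "hist ?T' u = hist T u" for u
    unfolding hist_def using assms(2) by simp
  then show "wf_tab phi ?T'"
    using assms(1,2) unfolding wf_tab_def by simp
  have "tab_nodes ?T' = tab_nodes T" "unmarked_nodes ?T' = unmarked_nodes T - {v}"
    "v \<in> unmarked_nodes T"
    using assms(2,3) unfolding tab_nodes_def unmarked_nodes_def by auto
  then show "tab_measure phi ?T' < tab_measure phi T"
    unfolding tab_measure_def using card_Diff1_less[OF finite_unmarked_nodes[OF assms(1)]] by simp
qed

lemma apply_out_Children_old:
  assumes "is_leaf T v" "T u \<noteq> None"
  shows "apply_out T v G (Children cs) u = T u"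
  using assms by (auto simp: apply_out_def is_leaf_def)

lemma tab_nodes_apply_out_Children:
  assumes "is_leaf T v"
  shows "tab_nodes (apply_out T v G (Children cs)) = tab_nodes T \<union> (\<lambda>i. v @ [i]) ` {..<length cs}"
  using assms by (auto simp: apply_out_def tab_nodes_def is_leaf_def)

lemma unmarked_nodes_apply_out_Children:
  "unmarked_nodes (apply_out T v G (Children cs)) \<subseteq> unmarked_nodes T \<union> (\<lambda>i. v @ [i]) ` {..<length cs}"
  by (auto simp: apply_out_def unmarked_nodes_def)

lemma wf_tab_apply_out_Children:
  assumes wf: "wf_tab phi T" and leaf: "is_leaf T v" and r: "rule_out (hist T v) (Children cs)"
  shows "wf_tab phi (apply_out T v G (Children cs))"
  unfolding wf_tab_def
proof (intro allI impI)
  let ?T' = "apply_out T v G (Children cs)"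
  fix u assume u: "?T' u \<noteq> None"
  then consider "T u \<noteq> None" | i where "i < length cs" "u = v @ [i]"
    by (auto simp: apply_out_def split: if_splits)
  then show "branch phi (hist ?T' u) \<and> set u \<subseteq> {0, 1} \<and> (\<forall>k\<le>length u. ?T' (take k u) \<noteq> None)"
  proof cases
    case 1
    then have prefixes: "\<forall>k\<le>length u. T (take k u) \<noteq> None"
      using wf unfolding wf_tab_def by blast
    then have "hist ?T' u = hist T u"
      by (intro hist_cong apply_out_Children_old[OF leaf]) simp
    with 1 prefixes show ?thesis
      using wf apply_out_Children_old[OF leaf] unfolding wf_tab_def by auto
  next
    case (2 i)
    have "T v \<noteq> None"
      using leaf by (simp add: is_leaf_def)
    then have v: "branch phi (hist T v)" "set v \<subseteq> {0, 1}" "\<forall>k\<le>length v. T (take k v) \<noteq> None"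
      using wf unfolding wf_tab_def by auto
    have "hist ?T' v = hist T v"
      by (intro hist_cong apply_out_Children_old[OF leaf]) (use v(3) in simp)
    then have "hist ?T' u = hist T v @ [cs ! i]"
      using 2 by (simp add: hist_snoc apply_out_def)
    then have "branch phi (hist ?T' u)"
      using branch_snoc[OF v(1) r] 2 by simp
    moreover have "set u \<subseteq> {0, 1}"
      using v(2) 2 rule_out_Children_length[OF r] by auto
    moreover have "?T' (take k u) \<noteq> None" if "k \<le> length u" for k
    proof (cases "k \<le> length v")
      case True
      then show ?thesis using v(3) 2 apply_out_Children_old[OF leaf] by simp
    next
      case False
      then show ?thesis using u 2 that by simp
    qed
    ultimately show ?thesis by blast
  qed
qed

lemma tab_measure_apply_out_Children_less:
  assumes wf: "wf_tab phi T" and leaf: "is_leaf T v" and r: "rule_out (hist T v) (Children cs)"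
  shows "tab_measure phi (apply_out T v G (Children cs)) < tab_measure phi T"
proof -
  let ?T' = "apply_out T v G (Children cs)"
  let ?N = "(\<lambda>i. v @ [i]) ` {..<length cs}"
  have "card ?N = length cs"
    by (simp add: card_image inj_on_def)
  have "?N \<inter> tab_nodes T = {}"
    using leaf by (auto simp: is_leaf_def tab_nodes_def)
  moreover have "?N \<subseteq> addresses phi"
    using wf_tab_nodes_addresses[OF wf_tab_apply_out_Children[OF wf leaf r]]
      tab_nodes_apply_out_Children[OF leaf] by blast
  ultimately have "addresses phi - tab_nodes T = (addresses phi - tab_nodes ?T') \<union> ?N"
    "(addresses phi - tab_nodes ?T') \<inter> ?N = {}"
    using tab_nodes_apply_out_Children[OF leaf] by auto
  then have free: "card (addresses phi - tab_nodes T) = card (addresses phi - tab_nodes ?T') + length cs"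
    using \<open>card ?N = length cs\<close>
    by (metis card_Un_disjoint finite_Diff finite_addresses finite_imageI finite_lessThan)
  have "card (unmarked_nodes ?T') \<le> card (unmarked_nodes T \<union> ?N)"
    using finite_unmarked_nodes[OF wf] by (intro card_mono unmarked_nodes_apply_out_Children) auto
  also have "\<dots> \<le> card (unmarked_nodes T) + length cs"
    using card_Un_le \<open>card ?N = length cs\<close> by metis
  finally show ?thesis
    using free rule_out_Children_length[OF r] unfolding tab_measure_def by simp
qed

lemma tab_step_wf_tab_measure:
  assumes "tab_step T T'" "wf_tab phi T"
  shows "wf_tab phi T' \<and> tab_measure phi T' < tab_measure phi T"
proof -
  obtain v G out where v: "T v = Some (G, Unmarked)" "is_leaf T v" "rule_out (hist T v) out"
    and T': "T' = apply_out T v G out"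
    using assms(1) unfolding tab_step_def by blast
  show ?thesis
  proof (cases out)
    case Ticked
    then show ?thesis using tab_step_mark[OF assms(2) v(1)] T' by (simp add: apply_out_def)
  next
    case Crossed
    then show ?thesis using tab_step_mark[OF assms(2) v(1)] T' by (simp add: apply_out_def)
  next
    case (Children cs)
    with v(3) have "rule_out (hist T v) (Children cs)"
      by simp
    then show ?thesis
      using wf_tab_apply_out_Children[OF assms(2) v(2)] tab_measure_apply_out_Children_less[OF assms(2) v(2)]
        T' Children by simp
  qed
qed

lemma no_infinite_tab_step_chain:
  assumes "wf_tab phi (f 0)"
  shows "\<not> (\<forall>n. tab_step (f n) (f (Suc n)))"
proof
  assume steps: "\<forall>n. tab_step (f n) (f (Suc n))"
  have "wf_tab phi (f n) \<and> n + tab_measure phi (f n) \<le> tab_measure phi (f 0)" for n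
  proof (induction n)
    case (Suc n)
    then show ?case using tab_step_wf_tab_measure[of "f n" "f (Suc n)" phi] steps by fastforce
  qed (simp add: assms)
  from this[of "Suc (tab_measure phi (f 0))"] show False by simp
qed

lemma static_rule_exists:
  assumes "\<not> poised G"
  shows "\<exists>out. static_rule G out"
proof -
  consider "G = {}" | a where "a \<in> G" "Neg a \<in> G" | f where "f \<in> G" "\<not> elementary f"
    using assms unfolding poised_def by blast
  then show ?thesis
  proof cases
    case 3
    show ?thesis
    proof (cases f)
      case (Neg g)
      then show ?thesis using 3 by (cases g) (auto simp: elementary_def intro: static_rule.intros)
    qed (use 3 in \<open>auto simp: elementary_def intro: static_rule.intros\<close>)
  qed (auto intro: static_rule.intros)
qed

lemma rule_out_exists: "\<exists>out. rule_out h out"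
  using static_rule_exists[of "last h"] by (auto simp: rule_out_def)

lemma finished_if_no_tab_step:
  assumes "\<nexists>T'. tab_step T T'"
  shows "finished T"
  unfolding finished_def
proof (intro allI impI)
  fix v G s assume v: "T v = Some (G, s) \<and> is_leaf T v"
  obtain out where "rule_out (hist T v) out"
    using rule_out_exists by blast
  then show "s \<noteq> Unmarked"
    using v assms unfolding tab_step_def by blast
qed

theorem mainTheorem3:
  fixes phi :: "('a::countable) ltl"
  shows "(\<nexists>L. infinite_branch phi L)
       \<and> (\<nexists>f. f 0 = init_tab phi \<and> (\<forall>n. tab_step (f n) (f (Suc n))))
       \<and> (\<forall>T. tab_step\<^sup>*\<^sup>* (init_tab phi) T \<longrightarrow> (\<nexists>T'. tab_step T T') \<longrightarrow> finished T)"
proof (intro conjI)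
  show "\<nexists>L. infinite_branch phi L"
    using no_infinite_branch by blast
  show "\<nexists>f. f 0 = init_tab phi \<and> (\<forall>n. tab_step (f n) (f (Suc n)))"
    using no_infinite_tab_step_chain wf_tab_init_tab by metis
  show "\<forall>T. tab_step\<^sup>*\<^sup>* (init_tab phi) T \<longrightarrow> (\<nexists>T'. tab_step T T') \<longrightarrow> finished T"
    using finished_if_no_tab_step by blast
qed

end
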